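(* In the noisy search problem with $1/\delta=2^L$ using the $dyaPM$ strategy described in the context, for every level $l<L$ the nested log-likelihood $U^{\{l\}}(t)$ is a submartingale; more precisely, for all $t>0$, $$\mathbb{E}[U^{\{l\}}(t+1)\mid\pi(t)]-U^{\{l\}}(t)\ge K_d:=\min\Big\{\min_{\rho\in[0,1/4]}\max\{f(\rho),g(\rho)\},\ \min_{\rho\in[1/4,1/2]}f(\rho),\ \tfrac14 D\big(\tfrac14 B_1+\tfrac34 B_0\,\|\,B_0\big)\Big\}>0,$$ where $B_1=\mathrm{Bern}(1-p[1/2])$, $B_0=\mathrm{Bern}(p[1/2])$, $f(\rho)=\rho\,D\big(B_1\,\|\,\tfrac34B_1+\tfrac14B_0\big)$, and $g(\rho)=(\tfrac12-\rho)\,D\big((1-4\rho)B_1+4\rho B_0\,\|\,(\tfrac12+\rho)B_1+(\tfrac12-\rho)B_0\big)$.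
   Context: Search problem: fix $\delta\in(0,1)$ with $N=1/\delta=2^L$, $L$ an integer. A target index $\theta$ is uniform on $\{1,\dots,N\}$. A noise profile $p:(0,1)\to(0,1/2)$ is continuous and non-decreasing; $p[x]:=p(x)$. At each time $t$ a query set $S_t$ is chosen from the past and one observes $Y_t=\mathbb{1}(\theta\in S_t)\oplus Z_t$ with, conditionally on $S_t$, $Z_t\sim\mathrm{Bern}(p[\delta|S_t|])$ conditionally i.i.d. across time. Posterior $\pi_i(t)=\mathbb{P}(\theta=i\mid S_1^t,Y_1^t)$, $\pi_i(0)=\delta$; $\pi_S=\sum_{i\in S}\pi_i$, $\pi_{[a,b]}=\sum_{i=a}^b\pi_i$. $dyaPM$: $H_l^m=\{m2^{L-l}+1,\dots,(m+1)2^{L-l}\}$ for $l=0,\dots,L$, $m=0,\dots,2^l-1$. At time $t$, $l^*_t$ is the largest $l$ with $\max_m\pi_{H_l^m}(t)\ge\tfrac12$, $m^*_t=\arg\max_m\pi_{H^m_{l^*_t}}(t)$, $d=m^*_t2^{L-l^*_t}+1$, $k^*=\arg\min_k|\pi_{[d,k]}(t)-\tfrac12|$, and $S_{t+1}=\{d,\dots,k^*\}$. Nested log-likelihood: for $q=1,\dots,2^l$, $\mathrm{bin}(q)=\{(q-1)2^{L-l}+1,\dots,q2^{L-l}\}$, $\pi^{\{l\}}_q(t)=\sum_{i\in\mathrm{bin}(q)}\pi_i(t)$, $U^{\{l\}}(t)=\sum_{q=1}^{2^l}\pi^{\{l\}}_q(t)\log\frac{\pi^{\{l\}}_q(t)}{1-\pi^{\{l\}}_q(t)}$.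 $D(\cdot\|\cdot)$ is KL divergence; convex combinations of Bernoulli distributions denote mixtures. *)

theory Defs
  imports "HOL-Analysis.Analysis"
begin

text \<open>Noisy search with N = 1/delta = 2^L. Posteriors are functions nat => real,
  meaningful on the index set {1..N}.\<close>

definition Nsz :: "nat \<Rightarrow> nat" where
  "Nsz L = 2 ^ L"

definition piS :: "(nat \<Rightarrow> real) \<Rightarrow> nat set \<Rightarrow> real" where
  "piS \<pi> S = (\<Sum>i\<in>S. \<pi> i)"

definition H :: "nat \<Rightarrow> nat \<Rightarrow> nat \<Rightarrow> nat set" where
  "H L l m = {m * 2 ^ (L - l) + 1 .. (m + 1) * 2 ^ (L - l)}"

definition lstar :: "nat \<Rightarrow> (nat \<Rightarrow> real) \<Rightarrow> nat" where
  "lstar L \<pi> = (GREATEST l. l \<le> L \<and> (\<exists>m < 2 ^ l. piS \<pi> (H L l m) \<ge> 1/2))"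

text \<open>S is a query set that dyaPM may choose at posterior pi
  (any tie-breaking of the argmax / argmin is allowed).\<close>
definition dyaPM_query :: "nat \<Rightarrow> (nat \<Rightarrow> real) \<Rightarrow> nat set \<Rightarrow> bool" where
  "dyaPM_query L \<pi> S \<longleftrightarrow>
     (let l = lstar L \<pi> in
      \<exists>m k. m < 2 ^ l \<and> (\<forall>m' < 2 ^ l. piS \<pi> (H L l m') \<le> piS \<pi> (H L l m)) \<and>
        (let d = m * 2 ^ (L - l) + 1 in
          k \<in> {d .. Nsz L} \<and>
          (\<forall>k' \<in> {d .. Nsz L}. \<bar>piS \<pi> {d..k} - 1/2\<bar> \<le> \<bar>piS \<pi> {d..k'} - 1/2\<bar>) \<and>
          S = {d..k}))"

definition noise :: "(real \<Rightarrow> real) \<Rightarrow> nat \<Rightarrow> nat set \<Rightarrow> real" where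
  "noise p L S = p (real (card S) / 2 ^ L)"

text \<open>P(Y = y | theta = i, S), with Y = 1(theta in S) xor Z.\<close>
definition lik :: "(real \<Rightarrow> real) \<Rightarrow> nat \<Rightarrow> nat set \<Rightarrow> bool \<Rightarrow> nat \<Rightarrow> real" where
  "lik p L S y i = (if (i \<in> S) = y then 1 - noise p L S else noise p L S)"

definition obs_prob :: "(real \<Rightarrow> real) \<Rightarrow> nat \<Rightarrow> (nat \<Rightarrow> real) \<Rightarrow> nat set \<Rightarrow> bool \<Rightarrow> real" where
  "obs_prob p L \<pi> S y = (\<Sum>i\<in>{1..Nsz L}. \<pi> i * lik p L S y i)"

definition bayes_update :: "(real \<Rightarrow> real) \<Rightarrow> nat \<Rightarrow> (nat \<Rightarrow> real) \<Rightarrow> nat set \<Rightarrow> bool \<Rightarrow> nat \<Rightarrow> real" where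
  "bayes_update p L \<pi> S y i = \<pi> i * lik p L S y i / obs_prob p L \<pi> S y"

text \<open>reach p L t pi: pi is a possible posterior pi(t) under dyaPM
  (observations with positive probability).\<close>
inductive reach :: "(real \<Rightarrow> real) \<Rightarrow> nat \<Rightarrow> nat \<Rightarrow> (nat \<Rightarrow> real) \<Rightarrow> bool" for p L where
  init: "reach p L 0 (\<lambda>i. if i \<in> {1..Nsz L} then 1 / 2 ^ L else 0)"
| step: "reach p L t \<pi> \<Longrightarrow> dyaPM_query L \<pi> S \<Longrightarrow> obs_prob p L \<pi> S y > 0 \<Longrightarrow>
         reach p L (Suc t) (bayes_update p L \<pi> S y)"

definition bin :: "nat \<Rightarrow> nat \<Rightarrow> nat \<Rightarrow> nat set" where
  "bin L l q = {(q - 1) * 2 ^ (L - l) + 1 .. q * 2 ^ (L - l)}"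

definition Unest :: "nat \<Rightarrow> nat \<Rightarrow> (nat \<Rightarrow> real) \<Rightarrow> real" where
  "Unest L l \<pi> = (\<Sum>q\<in>{1..2 ^ l}. let b = piS \<pi> (bin L l q) in b * ln (b / (1 - b)))"

definition expU_next :: "(real \<Rightarrow> real) \<Rightarrow> nat \<Rightarrow> nat \<Rightarrow> (nat \<Rightarrow> real) \<Rightarrow> nat set \<Rightarrow> real" where
  "expU_next p L l \<pi> S =
     (\<Sum>y\<in>{True, False}. obs_prob p L \<pi> S y * Unest L l (bayes_update p L \<pi> S y))"

text \<open>KL divergence D(Bern a || Bern b) (natural log); a, b = probability of 1.\<close>
definition KLb :: "real \<Rightarrow> real \<Rightarrow> real" where
  "KLb a b = a * ln (a / b) + (1 - a) * ln ((1 - a) / (1 - b))"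

text \<open>B1 = Bern(1 - p[1/2]), B0 = Bern(p[1/2]); a mixture c B1 + (1-c) B0 is
  Bern(c (1 - p[1/2]) + (1 - c) p[1/2]).\<close>
definition mixB :: "(real \<Rightarrow> real) \<Rightarrow> real \<Rightarrow> real" where
  "mixB p c = c * (1 - p (1/2)) + (1 - c) * p (1/2)"

definition fK :: "(real \<Rightarrow> real) \<Rightarrow> real \<Rightarrow> real" where
  "fK p \<rho> = \<rho> * KLb (mixB p 1) (mixB p (3/4))"

definition gK :: "(real \<Rightarrow> real) \<Rightarrow> real \<Rightarrow> real" where
  "gK p \<rho> = (1/2 - \<rho>) * KLb (mixB p (1 - 4 * \<rho>)) (mixB p (1/2 + \<rho>))"

definition Kd :: "(real \<Rightarrow> real) \<Rightarrow> real" where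
  "Kd p = min (min (Inf ((\<lambda>\<rho>. max (fK p \<rho>) (gK p \<rho>)) ` {0..1/4}))
                   (Inf (fK p ` {1/4..1/2})))
              (1/4 * KLb (mixB p (1/4)) (mixB p 0))"

end

theory Submission
  imports Defs
begin

text \<open>Write the nested log-likelihood \<open>Unest L l\<close> as the sum of
  \<open>xlogit x = x ln (x / (1 - x))\<close> over the masses of the level-\<open>l\<close> blocks. By the chain rule
  for divergences, the expected one-step increase of \<open>xlogit\<close> of the mass \<open>b\<close> of a set \<open>T\<close>
  is \<open>b\<close> times the divergence between the laws of the answer given \<open>\<theta> \<in> T\<close> and given
  \<open>\<theta> \<notin> T\<close>. Both laws are outputs of a binary symmetric channel with crossover probability
  \<open>p[\<delta>|S|] \<le> p[1/2]\<close>, so every block contributes nonnegatively, and since a noisier channel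
  is a degraded less noisy one, each contribution is at least the corresponding divergence at
  crossover \<open>p[1/2]\<close>.

  It remains to exhibit blocks contributing \<open>K\<^sub>d\<close>. The dyaPM query \<open>S\<close> is an interval of
  mass above \<open>1/4\<close>, and at most \<open>3/4\<close> unless it is a single point. If \<open>S\<close> lies in a single
  level-\<open>l\<close> block, that block gives the third term of \<open>K\<^sub>d\<close>. Otherwise \<open>S\<close> starts at a
  block boundary, the blocks it covers, of total mass \<open>\<rho>\<close>, give \<open>f(\<rho>)\<close>, and when
  \<open>\<rho> < 1/10\<close> the block in which \<open>S\<close> ends gives \<open>g(\<rho>)\<close>.\<close>

section \<open>Binary divergence\<close>

lemma log_sum_inequality:
  fixes a1 a2 b1 b2 :: real
  assumes "0 < a1" "0 < a2" "0 < b1" "0 < b2"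
  shows "(a1 + a2) * ln ((a1 + a2) / (b1 + b2)) \<le> a1 * ln (a1 / b1) + a2 * ln (a2 / b2)"
proof -
  define A B where "A = a1 + a2" and "B = b1 + b2"
  have AB: "0 < A" "0 < B" using assms by (auto simp: A_def B_def)
  have "ln ((b * A) / (a * B)) \<le> (b * A) / (a * B) - 1" if "0 < a" "0 < b" for a b
    using that AB by (intro ln_le_minus_one) auto
  moreover have "ln ((b * A) / (a * B)) = ln (A / B) - ln (a / b)" if "0 < a" "0 < b" for a b
    using that AB by (simp add: ln_div ln_mult)
  ultimately have "a1 * (ln (A / B) - ln (a1 / b1)) + a2 * (ln (A / B) - ln (a2 / b2))
      \<le> a1 * ((b1 * A) / (a1 * B) - 1) + a2 * ((b2 * A) / (a2 * B) - 1)"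
    using assms by (intro add_mono mult_left_mono) auto
  also have "\<dots> = (b1 * A / B - a1) + (b2 * A / B - a2)"
    using assms AB by (simp add: field_simps)
  also have "\<dots> = (b1 + b2) * A / B - A"
    by (simp add: A_def add_divide_distrib distrib_right)
  also have "\<dots> = 0"
    using AB by (simp add: B_def)
  finally show ?thesis by (simp add: A_def B_def algebra_simps)
qed

lemma KLb_nonneg:
  fixes x y :: real
  assumes "0 < x" "x < 1" "0 < y" "y < 1"
  shows "0 \<le> KLb x y"
  using log_sum_inequality[of x "1 - x" y "1 - y"] assms by (simp add: KLb_def)

lemma KLb_pos:
  fixes x y :: real
  assumes "0 < x" "x < 1" "0 < y" "y < 1" "x \<noteq> y"
  shows "0 < KLb x y"
proof -
  have "ln (y / x) \<noteq> y / x - 1"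
    using ln_eq_minus_one[of "y / x"] assms by auto
  then have "ln (y / x) < y / x - 1"
    using ln_le_minus_one[of "y / x"] assms by fastforce
  moreover have "ln ((1 - y) / (1 - x)) \<le> (1 - y) / (1 - x) - 1"
    using assms by (intro ln_le_minus_one) auto
  ultimately have "x * ln (y / x) + (1 - x) * ln ((1 - y) / (1 - x))
      < x * (y / x - 1) + (1 - x) * ((1 - y) / (1 - x) - 1)"
    using assms by (intro add_less_le_mono mult_left_mono mult_strict_left_mono) auto
  also have "\<dots> = 0" using assms by (simp add: field_simps)
  finally show ?thesis using assms by (simp add: KLb_def ln_div algebra_simps)
qed

lemma KLb_self [simp]: "KLb x x = 0"
  by (simp add: KLb_def)

lemma KLb_complement: "KLb (1 - x) (1 - y) = KLb x y"
  by (simp add: KLb_def algebra_simps)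

lemma KLb_convex:
  fixes x1 x2 y1 y2 c :: real
  assumes "0 < x1" "x1 < 1" "0 < y1" "y1 < 1" "0 < x2" "x2 < 1" "0 < y2" "y2 < 1"
    and "0 \<le> c" "c \<le> 1"
  shows "KLb (c * x1 + (1 - c) * x2) (c * y1 + (1 - c) * y2) \<le> c * KLb x1 y1 + (1 - c) * KLb x2 y2"
proof (cases "c = 0 \<or> c = 1")
  case False
  then have c: "0 < c" "c < 1" using assms by auto
  have cancel: "(c * a) / (c * b) = a / b" "((1 - c) * a) / ((1 - c) * b) = a / b" for a b
    using c by auto
  have compl: "c * (1 - a) + (1 - c) * (1 - b) = 1 - (c * a + (1 - c) * b)" for a b
    by (simp add: algebra_simps)
  have "(c * x1 + (1 - c) * x2) * ln ((c * x1 + (1 - c) * x2) / (c * y1 + (1 - c) * y2))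
      \<le> (c * x1) * ln ((c * x1) / (c * y1)) + ((1 - c) * x2) * ln (((1 - c) * x2) / ((1 - c) * y2))"
    using assms c by (intro log_sum_inequality) auto
  moreover have "(c * (1 - x1) + (1 - c) * (1 - x2))
        * ln ((c * (1 - x1) + (1 - c) * (1 - x2)) / (c * (1 - y1) + (1 - c) * (1 - y2)))
      \<le> (c * (1 - x1)) * ln ((c * (1 - x1)) / (c * (1 - y1)))
        + ((1 - c) * (1 - x2)) * ln (((1 - c) * (1 - x2)) / ((1 - c) * (1 - y2)))"
    using assms c by (intro log_sum_inequality) auto
  ultimately show ?thesis
    unfolding cancel compl KLb_def by (simp add: algebra_simps)
qed auto

lemma KLb_contract:
  fixes x y z c :: real
  assumes "0 < x" "x < 1" "0 < y" "y < 1" "0 < z" "z < 1" "0 \<le> c" "c \<le> 1"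
  shows "KLb (c * x + (1 - c) * z) (c * y + (1 - c) * z) \<le> KLb x y"
proof -
  have "KLb (c * x + (1 - c) * z) (c * y + (1 - c) * z) \<le> c * KLb x y + (1 - c) * KLb z z"
    using assms by (intro KLb_convex) auto
  also have "\<dots> \<le> KLb x y"
    using assms KLb_nonneg[of x y] by (simp add: mult_left_le_one_le)
  finally show ?thesis .
qed

lemma KLb_mono_nested:
  fixes x y x' y' :: real
  assumes "0 < y" "y \<le> y'" "y' \<le> x'" "x' \<le> x" "x < 1"
  shows "KLb x' y' \<le> KLb x y"
proof -
  have "y' \<le> x"
    using assms by linarith
  then have "x' \<in> closed_segment y' x" "y' \<in> closed_segment y x"
    using assms by (simp_all add: closed_segment_eq_real_ivl1)
  then obtain c c' where c: "0 \<le> c" "c \<le> 1" and x': "x' = (1 - c) * y' + c * x"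
    and c': "0 \<le> c'" "c' \<le> 1" and y': "y' = (1 - c') * y + c' * x"
    by (auto simp: in_segment)
  have "KLb x' y' = KLb (c * x + (1 - c) * y') (c * y' + (1 - c) * y')"
    unfolding x' by (simp add: algebra_simps)
  also have "\<dots> \<le> KLb x y'"
    using c assms \<open>y' \<le> x\<close> by (intro KLb_contract) auto
  also have "\<dots> = KLb ((1 - c') * x + (1 - (1 - c')) * x) ((1 - c') * y + (1 - (1 - c')) * x)"
    unfolding y' by (simp add: algebra_simps)
  also have "\<dots> \<le> KLb x y"
    using c' assms \<open>y' \<le> x\<close> by (intro KLb_contract) auto
  finally show ?thesis .
qed

section \<open>Binary symmetric channel\<close>

text \<open>\<open>bsc q c\<close> is the probability of output 1 of a binary symmetric channel with crossover
  probability \<open>q\<close> fed with a \<open>Bern(c)\<close> input; the mixture \<open>c B\<^sub>1 + (1 - c) B\<^sub>0\<close> of the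
  informal statement is \<open>bsc (p (1/2)) c\<close>.\<close>
definition bsc :: "real \<Rightarrow> real \<Rightarrow> real" where
  "bsc q c = c * (1 - q) + (1 - c) * q"

lemma mixB_eq_bsc: "mixB p c = bsc (p (1/2)) c"
  by (simp add: mixB_def bsc_def)

lemma bsc_affine: "bsc q c = q + (1 - 2 * q) * c"
  by (simp add: bsc_def algebra_simps)

lemma bsc_bounds:
  assumes "0 < q" "q < 1/2" "0 \<le> c" "c \<le> 1"
  shows "0 < bsc q c" "bsc q c < 1"
proof -
  have "0 \<le> (1 - 2 * q) * c" "(1 - 2 * q) * c \<le> 1 - 2 * q"
    using assms by (simp_all add: mult_left_le)
  then show "0 < bsc q c" "bsc q c < 1"
    using assms unfolding bsc_affine by linarith+
qed

lemma bsc_mono: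
  assumes "q \<le> 1/2" "c \<le> c'"
  shows "bsc q c \<le> bsc q c'"
  using assms unfolding bsc_affine by (simp add: mult_left_mono)

lemma bsc_eq_iff:
  assumes "q \<noteq> 1/2"
  shows "bsc q c = bsc q c' \<longleftrightarrow> c = c'"
  using assms unfolding bsc_affine by auto

lemma bsc_bsc: "bsc e (bsc q c) = bsc (bsc e q) c"
  by (simp add: bsc_affine algebra_simps)

lemma bsc_divide: "c \<noteq> 0 \<Longrightarrow> bsc q (v / c) = ((1 - q) * v + q * (c - v)) / c"
  by (simp add: bsc_def field_simps)

lemma KLb_bsc_nonneg:
  assumes "0 < q" "q < 1/2" "0 \<le> c" "c \<le> 1" "0 \<le> c'" "c' \<le> 1"
  shows "0 \<le> KLb (bsc q c) (bsc q c')"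
  using assms by (intro KLb_nonneg bsc_bounds) auto

lemma KLb_bsc_pos:
  assumes "0 < q" "q < 1/2" "0 \<le> c" "c \<le> 1" "0 \<le> c'" "c' \<le> 1" "c \<noteq> c'"
  shows "0 < KLb (bsc q c) (bsc q c')"
  using assms by (intro KLb_pos bsc_bounds) (auto simp: bsc_eq_iff)

lemma KLb_bsc_le:
  assumes "0 \<le> e" "e \<le> 1" "0 < x" "x < 1" "0 < y" "y < 1"
  shows "KLb (bsc e x) (bsc e y) \<le> KLb x y"
proof -
  have "KLb (bsc e x) (bsc e y)
      = KLb ((1 - e) * x + (1 - (1 - e)) * (1 - x)) ((1 - e) * y + (1 - (1 - e)) * (1 - y))"
    by (simp add: bsc_def algebra_simps)
  also have "\<dots> \<le> (1 - e) * KLb x y + (1 - (1 - e)) * KLb (1 - x) (1 - y)"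
    using assms by (intro KLb_convex) auto
  also have "\<dots> = KLb x y"
    by (simp add: KLb_complement algebra_simps)
  finally show ?thesis .
qed

text \<open>A noisier channel is a less noisy one followed by a further binary symmetric channel
  (\<open>bsc_bsc\<close>), so this is an instance of the data processing inequality \<open>KLb_bsc_le\<close>.\<close>
lemma KLb_bsc_noisier:
  assumes "0 < q" "q \<le> q'" "q' < 1/2" "0 \<le> c" "c \<le> 1" "0 \<le> c'" "c' \<le> 1"
  shows "KLb (bsc q' c) (bsc q' c') \<le> KLb (bsc q c) (bsc q c')"
proof -
  define e where "e = (q' - q) / (1 - 2 * q)"
  have "e * (1 - 2 * q) = q' - q"
    using assms by (simp add: e_def)
  moreover have "bsc e q = q + e * (1 - 2 * q)"
    by (simp add: bsc_affine algebra_simps)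
  ultimately have "bsc e q = q'"
    by simp
  then have "bsc q' a = bsc e (bsc q a)" for a
    by (simp add: bsc_bsc)
  moreover have "0 \<le> e" "e \<le> 1"
    using assms by (simp_all add: e_def field_simps)
  ultimately show ?thesis
    using assms by (simp only:) (intro KLb_bsc_le bsc_bounds; simp)
qed

lemma KLb_bsc_compare:
  assumes "0 < q" "q \<le> q'" "q' < 1/2"
    and "0 \<le> r'" "r' \<le> r1" "r1 \<le> r0" "r0 \<le> r" "r \<le> 1"
  shows "KLb (bsc q' r0) (bsc q' r1) \<le> KLb (bsc q r) (bsc q r')"
proof -
  have "KLb (bsc q' r0) (bsc q' r1) \<le> KLb (bsc q' r) (bsc q' r')"
    using assms by (intro KLb_mono_nested bsc_mono bsc_bounds) auto
  also have "\<dots> \<le> KLb (bsc q r) (bsc q r')"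
    using assms by (intro KLb_bsc_noisier) auto
  finally show ?thesis .
qed

section \<open>The constant Kd\<close>

lemma Kd_le_query_inside: "Kd p \<le> 1/4 * KLb (bsc (p (1/2)) (1/4)) (bsc (p (1/2)) 0)"
  by (simp add: Kd_def mixB_eq_bsc)

context
  fixes p :: "real \<Rightarrow> real"
  assumes p_half: "0 < p (1/2)" "p (1/2) < 1/2"
begin

lemma fK_nonneg: "0 \<le> \<rho> \<Longrightarrow> 0 \<le> fK p \<rho>"
  unfolding fK_def mixB_eq_bsc using KLb_bsc_nonneg[of "p (1/2)" 1 "3/4"] p_half by simp

lemma fK_pos: "0 < \<rho> \<Longrightarrow> 0 < fK p \<rho>"
  unfolding fK_def mixB_eq_bsc using KLb_bsc_pos[of "p (1/2)" 1 "3/4"] p_half by simp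

lemma fK_mono: "\<rho> \<le> \<rho>' \<Longrightarrow> fK p \<rho> \<le> fK p \<rho>'"
  unfolding fK_def mixB_eq_bsc using KLb_bsc_nonneg[of "p (1/2)" 1 "3/4"] p_half
  by (intro mult_right_mono) auto

lemma gK_one_tenth: "gK p (1/10) = 0"
  by (simp add: gK_def)

lemma gK_antimono:
  assumes "0 \<le> \<rho>" "\<rho> \<le> \<rho>'" "\<rho>' \<le> 1/10"
  shows "gK p \<rho>' \<le> gK p \<rho>"
proof -
  let ?K = "\<lambda>\<rho>. KLb (bsc (p (1/2)) (1 - 4 * \<rho>)) (bsc (p (1/2)) (1/2 + \<rho>))"
  have "?K \<rho>' \<le> ?K \<rho>"
    using assms p_half by (intro KLb_bsc_compare) auto
  moreover have "0 \<le> ?K \<rho>'"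
    using assms p_half by (intro KLb_bsc_nonneg) auto
  ultimately show ?thesis
    unfolding gK_def mixB_eq_bsc using assms by (intro mult_mono) auto
qed

lemma Kd_le_max_fK_gK:
  assumes "0 \<le> \<rho>" "\<rho> \<le> 1/4"
  shows "Kd p \<le> max (fK p \<rho>) (gK p \<rho>)"
proof -
  have "bdd_below ((\<lambda>\<rho>. max (fK p \<rho>) (gK p \<rho>)) ` {0..1/4})"
    by (rule bdd_belowI2[where m = 0]) (auto intro: max.coboundedI1 fK_nonneg)
  then have "Inf ((\<lambda>\<rho>. max (fK p \<rho>) (gK p \<rho>)) ` {0..1/4}) \<le> max (fK p \<rho>) (gK p \<rho>)"
    using assms by (intro cInf_lower) auto
  then show ?thesis
    unfolding Kd_def by linarith
qed

lemma Kd_le_fK: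
  assumes "1/10 \<le> \<rho>"
  shows "Kd p \<le> fK p \<rho>"
proof -
  have "Kd p \<le> max (fK p (1/10)) (gK p (1/10))"
    by (rule Kd_le_max_fK_gK) auto
  also have "\<dots> = fK p (1/10)"
    using fK_nonneg[of "1/10"] by (simp add: gK_one_tenth)
  also have "\<dots> \<le> fK p \<rho>"
    using assms by (rule fK_mono)
  finally show ?thesis .
qed

text \<open>No compactness is needed: \<open>fK\<close> increases and \<open>gK\<close> decreases on \<open>[0, 1/10]\<close>, so
  \<open>max (fK p \<rho>) (gK p \<rho>) \<ge> min (fK p (1/20)) (gK p (1/20))\<close> on \<open>[0, 1/4]\<close>.\<close>
lemma Kd_pos: "0 < Kd p"
proof -
  let ?m = "min (fK p (1/20)) (gK p (1/20))"
  have "0 < gK p (1/20)"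
    unfolding gK_def mixB_eq_bsc using KLb_bsc_pos[of "p (1/2)" "4/5" "11/20"] p_half by simp
  then have m: "0 < ?m"
    using fK_pos[of "1/20"] by simp
  have "?m \<le> max (fK p \<rho>) (gK p \<rho>)" if "\<rho> \<in> {0..1/4}" for \<rho>
  proof (cases "\<rho> \<le> 1/20")
    case True
    then show ?thesis using that gK_antimono[of \<rho> "1/20"] by auto
  next
    case False
    then show ?thesis using fK_mono[of "1/20" \<rho>] by auto
  qed
  then have "?m \<le> Inf ((\<lambda>\<rho>. max (fK p \<rho>) (gK p \<rho>)) ` {0..1/4})"
    by (intro cInf_greatest) auto
  then have "0 < Inf ((\<lambda>\<rho>. max (fK p \<rho>) (gK p \<rho>)) ` {0..1/4})"
    using m by linarith
  moreover have "fK p (1/4) \<le> Inf (fK p ` {1/4..1/2})"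
    by (intro cInf_greatest) (auto intro: fK_mono)
  moreover have "0 < KLb (mixB p (1/4)) (mixB p 0)"
    unfolding mixB_eq_bsc using KLb_bsc_pos[of "p (1/2)" "1/4" 0] p_half by simp
  ultimately show ?thesis
    using fK_pos[of "1/4"] unfolding Kd_def by simp
qed

end

section \<open>Posteriors\<close>

definition posterior :: "nat \<Rightarrow> (nat \<Rightarrow> real) \<Rightarrow> bool" where
  "posterior L \<pi> \<longleftrightarrow> (\<forall>i\<in>{1..Nsz L}. 0 < \<pi> i) \<and> piS \<pi> {1..Nsz L} = 1"

lemma piS_nonneg: "(\<And>i. i \<in> A \<Longrightarrow> 0 \<le> \<pi> i) \<Longrightarrow> 0 \<le> piS \<pi> A"
  unfolding piS_def by (rule sum_nonneg)

lemma piS_mono: "finite B \<Longrightarrow> A \<subseteq> B \<Longrightarrow> (\<And>i. i \<in> B \<Longrightarrow> 0 \<le> \<pi> i) \<Longrightarrow> piS \<pi> A \<le> piS \<pi> B"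
  unfolding piS_def by (rule sum_mono2) auto

lemma piS_Diff: "finite T \<Longrightarrow> piS \<pi> (T - S) = piS \<pi> T - piS \<pi> (T \<inter> S)"
  using sum.Int_Diff[of T \<pi> S] by (simp add: piS_def)

lemma posterior_pos: "posterior L \<pi> \<Longrightarrow> i \<in> {1..Nsz L} \<Longrightarrow> 0 < \<pi> i"
  by (simp add: posterior_def)

lemma posterior_piS_mono:
  "posterior L \<pi> \<Longrightarrow> A \<subseteq> B \<Longrightarrow> B \<subseteq> {1..Nsz L} \<Longrightarrow> piS \<pi> A \<le> piS \<pi> B"
  unfolding posterior_def by (intro piS_mono) (auto intro: finite_subset less_imp_le)

lemma posterior_piS_nonneg: "posterior L \<pi> \<Longrightarrow> A \<subseteq> {1..Nsz L} \<Longrightarrow> 0 \<le> piS \<pi> A"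
  unfolding posterior_def by (intro piS_nonneg) (auto intro: less_imp_le)

lemma posterior_piS_compl:
  "posterior L \<pi> \<Longrightarrow> A \<subseteq> {1..Nsz L} \<Longrightarrow> piS \<pi> ({1..Nsz L} - A) = 1 - piS \<pi> A"
  unfolding posterior_def by (simp add: piS_Diff Int_absorb1)

lemma posterior_overlap_bounds:
  assumes post: "posterior L \<pi>" and S: "S \<subseteq> {1..Nsz L}" and T: "T \<subseteq> {1..Nsz L}"
  shows "0 \<le> piS \<pi> (T \<inter> S)" "piS \<pi> (T \<inter> S) \<le> piS \<pi> T" "piS \<pi> (T \<inter> S) \<le> piS \<pi> S"
    "piS \<pi> S - piS \<pi> (T \<inter> S) \<le> 1 - piS \<pi> T"
proof -
  show "0 \<le> piS \<pi> (T \<inter> S)" "piS \<pi> (T \<inter> S) \<le> piS \<pi> T" "piS \<pi> (T \<inter> S) \<le> piS \<pi> S"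
    using S T by (auto intro!: posterior_piS_nonneg[OF post] posterior_piS_mono[OF post])
  have "piS \<pi> (S - T) \<le> piS \<pi> ({1..Nsz L} - T)"
    using post S by (intro posterior_piS_mono) auto
  then show "piS \<pi> S - piS \<pi> (T \<inter> S) \<le> 1 - piS \<pi> T"
    using posterior_piS_compl[OF post T] piS_Diff[of S \<pi> T] finite_subset[OF S]
    by (simp add: Int_commute)
qed

lemma sum_mult_lik:
  assumes "finite T"
  shows "(\<Sum>i\<in>T. \<pi> i * lik p L S y i)
     = (if y then 1 - noise p L S else noise p L S) * piS \<pi> (T \<inter> S)
       + (if y then noise p L S else 1 - noise p L S) * piS \<pi> (T - S)"
proof -
  have "(\<Sum>i\<in>T. \<pi> i * lik p L S y i)
      = (\<Sum>i\<in>T \<inter> S. \<pi> i * lik p L S y i) + (\<Sum>i\<in>T - S. \<pi> i * lik p L S y i)"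
    using sum.Int_Diff[OF assms] by blast
  also have "\<dots> = (\<Sum>i\<in>T \<inter> S. \<pi> i * (if y then 1 - noise p L S else noise p L S))
      + (\<Sum>i\<in>T - S. \<pi> i * (if y then noise p L S else 1 - noise p L S))"
    by (intro arg_cong2[where f = "(+)"] sum.cong) (auto simp: lik_def)
  finally show ?thesis
    by (simp add: piS_def sum_distrib_right mult.commute)
qed

lemma obs_prob_eq:
  assumes post: "posterior L \<pi>" and S: "S \<subseteq> {1..Nsz L}"
  shows "obs_prob p L \<pi> S y = (if y then 1 - noise p L S else noise p L S) * piS \<pi> S
    + (if y then noise p L S else 1 - noise p L S) * (1 - piS \<pi> S)"
  unfolding obs_prob_def sum_mult_lik[OF finite_atLeastAtMost] Int_absorb1[OF S]
    posterior_piS_compl[OF post S] ..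

lemma piS_bayes_update:
  "piS (bayes_update p L \<pi> S y) T = (\<Sum>i\<in>T. \<pi> i * lik p L S y i) / obs_prob p L \<pi> S y"
  by (simp add: piS_def bayes_update_def sum_divide_distrib)

lemma posterior_bayes_update:
  assumes post: "posterior L \<pi>" and q: "0 < noise p L S" "noise p L S < 1"
  shows "posterior L (bayes_update p L \<pi> S y)"
proof -
  have lik: "0 < lik p L S y i" for i
    using q by (simp add: lik_def)
  then have obs: "0 < obs_prob p L \<pi> S y"
    using post unfolding obs_prob_def posterior_def by (intro sum_pos) (auto simp: Nsz_def)
  then have "piS (bayes_update p L \<pi> S y) {1..Nsz L} = 1"
    by (simp add: piS_def bayes_update_def obs_prob_def flip: sum_divide_distrib)
  then show ?thesis
    using post lik obs by (simp add: posterior_def bayes_update_def)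
qed

section \<open>Expected gain of xlogit\<close>

definition xlogit :: "real \<Rightarrow> real" where
  "xlogit x = x * ln (x / (1 - x))"

lemma Unest_eq_sum_xlogit: "Unest L l \<pi> = (\<Sum>q\<in>{1..2 ^ l}. xlogit (piS \<pi> (bin L l q)))"
  by (simp add: Unest_def xlogit_def Let_def)

lemma xlogit_scaled:
  assumes "0 < A" "A < P"
  shows "P * xlogit (A / P) = A * ln (A / (P - A))"
proof -
  have "(A / P) / (1 - A / P) = A / (P - A)"
    using assms by (simp add: field_simps)
  then show ?thesis
    using assms by (simp add: xlogit_def)
qed

text \<open>The chain rule for divergences: a set of mass \<open>A\<^sub>1 + A\<^sub>0\<close> against a complement of mass
  \<open>B\<^sub>1 + B\<^sub>0\<close>, split by a binary observation, gains in average \<open>xlogit\<close> exactly its mass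
  times the divergence between the observation laws on the set and on its complement.\<close>
lemma xlogit_split:
  fixes A1 A0 B1 B0 :: real
  assumes "0 < A1" "0 < A0" "0 < B1" "0 < B0" "A1 + A0 + B1 + B0 = 1"
  shows "(A1 + B1) * xlogit (A1 / (A1 + B1)) + (A0 + B0) * xlogit (A0 / (A0 + B0))
       - xlogit (A1 + A0) = (A1 + A0) * KLb (A1 / (A1 + A0)) (B1 / (B1 + B0))"
proof -
  define b c where "b = A1 + A0" and "c = B1 + B0"
  have bc: "0 < b" "0 < c" "1 - b = c"
    using assms by (simp_all add: b_def c_def)
  have ln_ratio: "ln ((A / b) / (B / c)) = ln (A / B) - ln (b / c)" if "0 < A" "0 < B" for A B
    using that bc by (simp add: ln_div ln_mult)
  have "b * KLb (A1 / b) (B1 / c) = A1 * ln ((A1 / b) / (B1 / c)) + A0 * ln ((A0 / b) / (B0 / c))"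
  proof -
    have "1 - A1 / b = A0 / b" "1 - B1 / c = B0 / c"
      using bc by (simp_all add: b_def c_def field_simps)
    then show ?thesis
      unfolding KLb_def using bc by (simp add: distrib_left)
  qed
  also have "\<dots> = A1 * (ln (A1 / B1) - ln (b / c)) + A0 * (ln (A0 / B0) - ln (b / c))"
    by (simp only: ln_ratio assms)
  also have "\<dots> = A1 * ln (A1 / B1) + A0 * ln (A0 / B0) - b * ln (b / c)"
    by (simp add: b_def algebra_simps)
  also have "\<dots> = (A1 + B1) * xlogit (A1 / (A1 + B1)) + (A0 + B0) * xlogit (A0 / (A0 + B0))
      - xlogit b"
    using assms bc xlogit_scaled[of A1 "A1 + B1"] xlogit_scaled[of A0 "A0 + B0"]
    by (simp add: xlogit_def)
  finally show ?thesis
    by (simp add: b_def c_def)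
qed

text \<open>The contribution of a set of mass \<open>b\<close> to the drift, when it shares mass \<open>u\<close> with a query
  of mass \<open>s\<close> answered through a channel with crossover probability \<open>q\<close>.\<close>
definition set_drift :: "real \<Rightarrow> real \<Rightarrow> real \<Rightarrow> real \<Rightarrow> real" where
  "set_drift q b u s = b * KLb (bsc q (u / b)) (bsc q ((s - u) / (1 - b)))"

lemma set_drift_nonneg:
  assumes "0 < q" "q < 1/2" "0 < b" "b < 1" "0 \<le> u" "u \<le> b" "u \<le> s" "s - u \<le> 1 - b"
  shows "0 \<le> set_drift q b u s"
  unfolding set_drift_def using assms by (intro mult_nonneg_nonneg KLb_bsc_nonneg) auto

context
  fixes q q' :: real
  assumes q: "0 < q" "q \<le> q'" "q' < 1/2"
begin

lemma set_drift_query_inside: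
  assumes "1/4 < s" "s \<le> b" "b < 1"
  shows "1/4 * KLb (bsc q' (1/4)) (bsc q' 0) \<le> set_drift q b s s"
proof -
  have "s \<le> s / b" "s / b \<le> 1"
    using assms by (simp_all add: field_simps mult_left_le_one_le)
  then have "KLb (bsc q' (1/4)) (bsc q' 0) \<le> KLb (bsc q (s / b)) (bsc q 0)"
    using q assms by (intro KLb_bsc_compare) auto
  moreover have "0 \<le> KLb (bsc q' (1/4)) (bsc q' 0)"
    using q by (intro KLb_bsc_nonneg) auto
  ultimately show ?thesis
    unfolding set_drift_def using assms by (intro mult_mono) auto
qed

lemma set_drift_inside_query:
  assumes "0 < b" "b \<le> s" "s \<le> 3/4"
  shows "b * KLb (bsc q' 1) (bsc q' (3/4)) \<le> set_drift q b b s"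
proof -
  have "0 \<le> (s - b) / (1 - b)" "(s - b) / (1 - b) \<le> 3/4"
    using assms by (simp_all add: field_simps)
  then have "KLb (bsc q' 1) (bsc q' (3/4)) \<le> KLb (bsc q 1) (bsc q ((s - b) / (1 - b)))"
    using q by (intro KLb_bsc_compare) auto
  then show ?thesis
    unfolding set_drift_def using assms by (simp add: mult_left_mono)
qed

text \<open>Here \<open>F\<close> is the mass of the query outside the set; the bound needs \<open>F \<le> 1/10\<close> so that
  \<open>1/2 + F \<le> 1 - 4 F\<close>.\<close>
lemma set_drift_partial:
  assumes F: "0 \<le> F" "F \<le> 1/10" and b: "1/2 - F \<le> b" "b \<le> 1/2"
    and s: "1 - (F + b) \<le> s" and u: "u = s - F" "u \<le> b"
  shows "(1/2 - F) * KLb (bsc q' (1 - 4 * F)) (bsc q' (1/2 + F)) \<le> set_drift q b u s"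
proof -
  have "(1 - 4 * F) * b \<le> 1 - 2 * F - b"
    using mult_nonneg_nonneg[of "1 - 2 * F" "1 - 2 * b"] F b by (simp add: algebra_simps)
  then have "1 - 4 * F \<le> u / b" "u / b \<le> 1"
    using F b s u by (simp_all add: field_simps)
  moreover have "F / (1 - b) \<le> 2 * F"
    using F b mult_left_mono[of "2 * b" 1 F] by (simp add: field_simps)
  ultimately have "KLb (bsc q' (1 - 4 * F)) (bsc q' (1/2 + F))
      \<le> KLb (bsc q (u / b)) (bsc q (F / (1 - b)))"
    using q F b by (intro KLb_bsc_compare) auto
  moreover have "0 \<le> KLb (bsc q' (1 - 4 * F)) (bsc q' (1/2 + F))"
    using q F by (intro KLb_bsc_nonneg) auto
  ultimately show ?thesis
    unfolding set_drift_def using F b u by (intro mult_mono) auto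
qed

end

lemma expected_xlogit_gain:
  assumes post: "posterior L \<pi>" and S: "S \<subseteq> {1..Nsz L}"
    and q: "0 < noise p L S" "noise p L S < 1/2"
    and T: "T \<subseteq> {1..Nsz L}" "0 < piS \<pi> T" "piS \<pi> T < 1"
  shows "(\<Sum>y\<in>{True, False}. obs_prob p L \<pi> S y * xlogit (piS (bayes_update p L \<pi> S y) T))
      - xlogit (piS \<pi> T)
    = set_drift (noise p L S) (piS \<pi> T) (piS \<pi> (T \<inter> S)) (piS \<pi> S)"
proof -
  define q b u s where "q = noise p L S" and "b = piS \<pi> T" and "u = piS \<pi> (T \<inter> S)"
    and "s = piS \<pi> S"
  define x z where "x = bsc q (u / b)" and "z = bsc q ((s - u) / (1 - b))"
  \<comment> \<open>the joint probabilities of the answers 1 and 0 with \<open>\<theta> \<in> T\<close> and with \<open>\<theta> \<notin> T\<close>\<close>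
  define A1 A0 B1 B0 where "A1 = (1 - q) * u + q * (b - u)" and "A0 = q * u + (1 - q) * (b - u)"
    and "B1 = (1 - q) * (s - u) + q * ((1 - b) - (s - u))"
    and "B0 = q * (s - u) + (1 - q) * ((1 - b) - (s - u))"
  have fin: "finite T"
    using T(1) finite_subset by auto
  have "0 \<le> u" "u \<le> b" "u \<le> s" "s - u \<le> 1 - b"
    using posterior_overlap_bounds[OF post S T(1)] by (simp_all add: u_def b_def s_def)
  then have xz: "0 < x" "x < 1" "0 < z" "z < 1"
    using q T(2,3) by (auto intro!: bsc_bounds simp: x_def z_def q_def b_def)
  have "b \<noteq> 0" "b \<noteq> 1"
    using T(2,3) by (simp_all add: b_def)
  then have A: "A1 = b * x" "A0 = b * (1 - x)" "B1 = (1 - b) * z" "B0 = (1 - b) * (1 - z)"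
    by (simp_all add: x_def z_def bsc_divide A1_def A0_def B1_def B0_def field_simps)
  have pos: "0 < A1" "0 < A0" "0 < B1" "0 < B0"
    using xz T(2,3) by (simp_all add: A b_def)
  have masses: "A1 + A0 = b" "B1 + B0 = 1 - b"
    by (simp_all add: A algebra_simps)
  moreover have "1 - b \<noteq> 0"
    using \<open>b \<noteq> 1\<close> by simp
  ultimately have drift: "set_drift q b u s = (A1 + A0) * KLb (A1 / (A1 + A0)) (B1 / (B1 + B0))"
    using \<open>b \<noteq> 0\<close> by (simp add: set_drift_def flip: x_def z_def) (simp add: A)
  have lik_T: "(\<Sum>i\<in>T. \<pi> i * lik p L S y i) = (if y then A1 else A0)" for y
    using fin by (simp add: sum_mult_lik piS_Diff A1_def A0_def q_def b_def u_def)
  have obs: "obs_prob p L \<pi> S y = (if y then A1 + B1 else A0 + B0)" for y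
    unfolding obs_prob_eq[OF post S] q_def[symmetric] s_def[symmetric]
    by (simp add: A1_def A0_def B1_def B0_def algebra_simps)
  show ?thesis
    using xlogit_split[OF pos] masses
    by (simp add: piS_bayes_update lik_T obs drift add.assoc flip: q_def b_def u_def s_def)
qed

section \<open>Dyadic blocks\<close>

lemma bin_Suc: "bin L l (Suc m) = H L l m"
  by (simp add: bin_def H_def)

lemma H_eq: "H L l m = {m * 2 ^ (L - l) + 1 .. Suc m * 2 ^ (L - l)}"
  by (simp add: H_def)

lemma H_subset:
  assumes "l \<le> L" "m < 2 ^ l"
  shows "H L l m \<subseteq> {1..Nsz L}"
proof -
  have "Suc m * 2 ^ (L - l) \<le> 2 ^ l * 2 ^ (L - l)"
    using assms by (intro mult_right_mono) auto
  also have "\<dots> = 2 ^ L"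
    using assms by (simp flip: power_add)
  finally show ?thesis
    by (auto simp: H_eq Nsz_def)
qed

lemma H_nested:
  assumes "l \<le> l'" "l' \<le> L"
  shows "H L l' m \<subseteq> H L l (m div 2 ^ (l' - l))"
proof -
  define c w where "c = (2::nat) ^ (l' - l)" and "w = (2::nat) ^ (L - l')"
  have w: "2 ^ (L - l) = c * w"
    using assms by (simp add: c_def w_def flip: power_add)
  have "m mod c < c" "Suc (m div c) * c = m div c * c + c"
    by (simp_all add: c_def)
  then have "m div c * c \<le> m" "Suc m \<le> Suc (m div c) * c"
    using div_mult_mod_eq[of m c] by linarith+
  then have "m div c * c * w \<le> m * w" "Suc m * w \<le> Suc (m div c) * c * w"
    by (intro mult_right_mono; simp)+
  then show ?thesis
    unfolding H_eq w w_def[symmetric] c_def[symmetric] by (auto simp: algebra_simps)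
qed

lemma piS_atLeastAtMost_split:
  assumes "a \<le> b + 1" "b \<le> c"
  shows "piS \<pi> {a..c} = piS \<pi> {a..b} + piS \<pi> {b + 1..c}"
proof -
  have "{a..c} = {a..b} \<union> {b + 1..c}"
    using assms by auto
  then show ?thesis
    by (simp add: piS_def sum.union_disjoint ivl_disj_int_two(8))
qed

lemma piS_blocks:
  assumes "a \<le> b"
  shows "piS \<pi> {a * 2 ^ (L - l) + 1 .. b * 2 ^ (L - l)} = (\<Sum>m = a..<b. piS \<pi> (H L l m))"
  using assms
proof (induction b)
  case (Suc b)
  show ?case
  proof (cases "a = Suc b")
    case False
    then have "piS \<pi> {a * 2 ^ (L - l) + 1 .. Suc b * 2 ^ (L - l)}
        = piS \<pi> {a * 2 ^ (L - l) + 1 .. b * 2 ^ (L - l)} + piS \<pi> (H L l b)"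
      using Suc.prems unfolding H_eq by (intro piS_atLeastAtMost_split) auto
    with Suc False show ?thesis
      by simp
  qed (simp add: piS_def)
qed (simp add: piS_def)

lemma posterior_piS_pos:
  "posterior L \<pi> \<Longrightarrow> A \<subseteq> {1..Nsz L} \<Longrightarrow> A \<noteq> {} \<Longrightarrow> 0 < piS \<pi> A"
  unfolding posterior_def piS_def by (intro sum_pos) (auto intro: finite_subset)

lemma posterior_piS_less_one:
  assumes post: "posterior L \<pi>" and A: "A \<subseteq> {1..Nsz L}" and x: "x \<in> {1..Nsz L} - A"
  shows "piS \<pi> A < 1"
proof -
  have "piS \<pi> A \<le> piS \<pi> ({1..Nsz L} - {x})"
    using post A x by (intro posterior_piS_mono) auto
  also have "\<dots> = 1 - piS \<pi> {x}"
    using post x by (intro posterior_piS_compl) auto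
  also have "\<dots> < 1"
    using post x by (simp add: posterior_def piS_def)
  finally show ?thesis .
qed

lemma posterior_piS_H_bounds:
  assumes post: "posterior L \<pi>" and l: "1 \<le> l" "l \<le> L" and m: "m < 2 ^ l"
  shows "0 < piS \<pi> (H L l m)" "piS \<pi> (H L l m) < 1"
proof -
  have w: "(2::nat) ^ L = 2 ^ l * 2 ^ (L - l)" "2 ^ (L - l) < (2::nat) ^ L"
    using l by (simp_all flip: power_add)
  show "0 < piS \<pi> (H L l m)"
    using posterior_piS_pos[OF post H_subset[OF l(2) m]] by (simp add: H_eq)
  have "(if m = 0 then Nsz L else 1) \<in> {1..Nsz L} - H L l m"
    using w by (auto simp: H_eq Nsz_def)
  then show "piS \<pi> (H L l m) < 1"
    using posterior_piS_less_one[OF post H_subset[OF l(2) m]] by blast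
qed

definition block_drift :: "(real \<Rightarrow> real) \<Rightarrow> nat \<Rightarrow> nat \<Rightarrow> (nat \<Rightarrow> real) \<Rightarrow> nat set \<Rightarrow> nat \<Rightarrow> real"
  where "block_drift p L l \<pi> S m =
    set_drift (noise p L S) (piS \<pi> (H L l m)) (piS \<pi> (H L l m \<inter> S)) (piS \<pi> S)"

context
  fixes p :: "real \<Rightarrow> real" and L l :: nat and \<pi> :: "nat \<Rightarrow> real" and S :: "nat set"
  assumes post: "posterior L \<pi>" and l: "1 \<le> l" "l \<le> L" and S: "S \<subseteq> {1..Nsz L}"
    and q: "0 < noise p L S" "noise p L S < 1/2"
begin

lemma drift_eq_sum_block_drift:
  "expU_next p L l \<pi> S - Unest L l \<pi> = (\<Sum>m<2 ^ l. block_drift p L l \<pi> S m)"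
proof -
  have "expU_next p L l \<pi> S - Unest L l \<pi>
      = (\<Sum>m<2 ^ l. (\<Sum>y\<in>{True, False}.
          obs_prob p L \<pi> S y * xlogit (piS (bayes_update p L \<pi> S y) (H L l m)))
        - xlogit (piS \<pi> (H L l m)))"
    by (simp add: expU_next_def Unest_eq_sum_xlogit sum.atLeast1_atMost_eq bin_Suc
        sum_distrib_left sum.distrib sum_subtractf)
  also have "\<dots> = (\<Sum>m<2 ^ l. block_drift p L l \<pi> S m)"
    unfolding block_drift_def using posterior_piS_H_bounds[OF post l] H_subset[OF l(2)]
    by (intro sum.cong refl expected_xlogit_gain[OF post S q]) auto
  finally show ?thesis .
qed

lemma block_drift_nonneg: "m < 2 ^ l \<Longrightarrow> 0 \<le> block_drift p L l \<pi> S m"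
  unfolding block_drift_def
  using q posterior_piS_H_bounds[OF post l] posterior_overlap_bounds[OF post S H_subset[OF l(2)]]
  by (intro set_drift_nonneg) auto

lemma sum_block_drift_le_drift:
  "M \<subseteq> {..<2 ^ l} \<Longrightarrow> sum (block_drift p L l \<pi> S) M \<le> expU_next p L l \<pi> S - Unest L l \<pi>"
  unfolding drift_eq_sum_block_drift by (rule sum_mono2) (auto intro: block_drift_nonneg)

end

section \<open>The dyaPM query\<close>

definition closest_half :: "(nat \<Rightarrow> real) \<Rightarrow> nat \<Rightarrow> nat \<Rightarrow> nat \<Rightarrow> bool" where
  "closest_half \<pi> d N k \<longleftrightarrow>
     k \<in> {d..N} \<and> (\<forall>k'\<in>{d..N}. \<bar>piS \<pi> {d..k} - 1/2\<bar> \<le> \<bar>piS \<pi> {d..k'} - 1/2\<bar>)"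

context
  fixes \<pi> :: "nat \<Rightarrow> real" and d N k :: nat
  assumes pos: "\<And>i. i \<in> {d..N} \<Longrightarrow> 0 < \<pi> i"
    and closest: "closest_half \<pi> d N k"
begin

lemma closest_half_bounds: "d \<le> k" "k \<le> N"
  using closest by (auto simp: closest_half_def)

lemma closest_half_le_dist: "e \<in> {d..N} \<Longrightarrow> \<bar>piS \<pi> {d..k} - 1/2\<bar> \<le> \<bar>piS \<pi> {d..e} - 1/2\<bar>"
  using closest by (auto simp: closest_half_def)

lemma piS_prefix_strict_mono:
  assumes "d \<le> a + 1" "a < e" "e \<le> N"
  shows "piS \<pi> {d..a} < piS \<pi> {d..e}"
proof -
  have "0 < piS \<pi> {a + 1..e}"
    unfolding piS_def using assms pos by (intro sum_pos) auto
  then show ?thesis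
    using piS_atLeastAtMost_split[of d a e \<pi>] assms by simp
qed

lemma closest_half_le:
  assumes "e \<in> {d..N}" "1/2 \<le> piS \<pi> {d..e}"
  shows "k \<le> e"
proof (rule ccontr)
  assume "\<not> k \<le> e"
  then have "piS \<pi> {d..e} < piS \<pi> {d..k}"
    using assms closest_half_bounds by (intro piS_prefix_strict_mono) auto
  then show False
    using closest_half_le_dist[OF assms(1)] assms(2) by linarith
qed

lemma closest_half_singleton:
  assumes "1/2 \<le> \<pi> d"
  shows "k = d"
  using closest_half_le[of d] closest_half_bounds assms by (simp add: piS_def)

lemma closest_half_beyond:
  assumes "k < e" "e \<le> N"
  shows "1/2 \<le> piS \<pi> {d..e}" "1 - piS \<pi> {d..e} \<le> piS \<pi> {d..k}"
proof -
  have "piS \<pi> {d..k} < piS \<pi> {d..e}"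
    using assms closest_half_bounds by (intro piS_prefix_strict_mono) auto
  moreover have "\<bar>piS \<pi> {d..k} - 1/2\<bar> \<le> \<bar>piS \<pi> {d..e} - 1/2\<bar>"
    using assms closest_half_bounds by (intro closest_half_le_dist) auto
  ultimately show "1/2 \<le> piS \<pi> {d..e}" "1 - piS \<pi> {d..e} \<le> piS \<pi> {d..k}"
    by arith+
qed

context
  assumes small: "\<And>i. i \<in> {d..N} \<Longrightarrow> \<pi> i < 1/2"
begin

text \<open>The prefix sums grow in steps smaller than \<open>1/2\<close>, so the one closest to \<open>1/2\<close> is within
  \<open>1/4\<close> of it.\<close>
lemma closest_half_gt_quarter:
  assumes "1/2 \<le> piS \<pi> {d..N}"
  shows "1/4 < piS \<pi> {d..k}"
proof (cases "1/2 \<le> piS \<pi> {d..k}")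
  case False
  then have "k < N"
    using assms closest_half_bounds by (cases "k = N") auto
  then have "\<bar>piS \<pi> {d..k} - 1/2\<bar> \<le> \<bar>piS \<pi> {d..k} + \<pi> (k + 1) - 1/2\<bar>"
    using closest_half_le_dist[of "k + 1"] closest_half_bounds
    by (simp add: piS_def)
  moreover have "\<pi> (k + 1) < 1/2" "0 < \<pi> (k + 1)"
    using small[of "k + 1"] pos[of "k + 1"] \<open>k < N\<close> closest_half_bounds by auto
  ultimately show ?thesis
    using False by arith
qed simp

lemma closest_half_lt_three_quarters:
  assumes "d < k"
  shows "piS \<pi> {d..k} < 3/4"
proof -
  define k0 where "k0 = k - 1"
  have k: "k = k0 + 1"
    using assms by (simp add: k0_def)
  have "piS \<pi> {d..k} = piS \<pi> {d..k0} + \<pi> k"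
    using assms k by (simp add: piS_def)
  moreover have "\<bar>piS \<pi> {d..k} - 1/2\<bar> \<le> \<bar>piS \<pi> {d..k0} - 1/2\<bar>"
    using assms k closest_half_bounds by (intro closest_half_le_dist) auto
  moreover have "0 < \<pi> k" "\<pi> k < 1/2"
    using small[of k] pos[of k] closest_half_bounds by auto
  ultimately show ?thesis
    by arith
qed

end

end

lemma H_top_level: "H L L m = {Suc m}"
  by (simp add: H_def)

context
  fixes L :: nat and \<pi> :: "nat \<Rightarrow> real"
  assumes post: "posterior L \<pi>" and L: "1 \<le> L"
begin

lemma half_mass_level_one: "\<exists>m<2. 1/2 \<le> piS \<pi> (H L 1 m)"
proof -
  have w: "2 ^ L = 2 * 2 ^ (L - 1)"
    using L by (simp flip: power_Suc)
  have "piS \<pi> {1..Nsz L} = (\<Sum>m = 0..<2. piS \<pi> (H L 1 m))"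
    using piS_blocks[of 0 2 \<pi> L 1] by (simp add: Nsz_def w)
  also have "\<dots> = piS \<pi> (H L 1 0) + piS \<pi> (H L 1 1)"
    by (simp add: atLeast0LessThan lessThan_nat_numeral)
  finally have "piS \<pi> (H L 1 0) + piS \<pi> (H L 1 1) = piS \<pi> {1..Nsz L}" ..
  then have "1/2 \<le> piS \<pi> (H L 1 0) \<or> 1/2 \<le> piS \<pi> (H L 1 1)"
    using post unfolding posterior_def by linarith
  then show ?thesis
    by force
qed

lemma lstar_spec:
  "1 \<le> lstar L \<pi>" "lstar L \<pi> \<le> L" "\<exists>m<2 ^ lstar L \<pi>. 1/2 \<le> piS \<pi> (H L (lstar L \<pi>) m)"
  using half_mass_level_one L
    Greatest_le_nat[of "\<lambda>l. l \<le> L \<and> (\<exists>m<2 ^ l. 1/2 \<le> piS \<pi> (H L l m))" 1 L]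
    GreatestI_nat[of "\<lambda>l. l \<le> L \<and> (\<exists>m<2 ^ l. 1/2 \<le> piS \<pi> (H L l m))" 1 L]
  unfolding lstar_def by auto

lemma lstar_greatest:
  assumes "lstar L \<pi> < l" "l \<le> L" "m < 2 ^ l"
  shows "piS \<pi> (H L l m) < 1/2"
  using assms Greatest_le_nat[of "\<lambda>l. l \<le> L \<and> (\<exists>m<2 ^ l. 1/2 \<le> piS \<pi> (H L l m))" l L]
  unfolding lstar_def by force

lemma lstar_less_imp_lt_half:
  assumes "lstar L \<pi> < L" "i \<in> {1..Nsz L}"
  shows "\<pi> i < 1/2"
  using lstar_greatest[of L "i - 1"] assms by (auto simp: H_top_level piS_def Nsz_def)

lemma dyaPM_queryE:
  assumes "dyaPM_query L \<pi> S"
  obtains m k where "m < 2 ^ lstar L \<pi>" "1/2 \<le> piS \<pi> (H L (lstar L \<pi>) m)"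
    "S = {m * 2 ^ (L - lstar L \<pi>) + 1..k}" "S \<subseteq> H L (lstar L \<pi>) m"
    "closest_half \<pi> (m * 2 ^ (L - lstar L \<pi>) + 1) (Nsz L) k"
proof -
  define ls where "ls = lstar L \<pi>"
  obtain m k where m: "m < 2 ^ ls" "\<forall>m' < 2 ^ ls. piS \<pi> (H L ls m') \<le> piS \<pi> (H L ls m)"
    and closest: "closest_half \<pi> (m * 2 ^ (L - ls) + 1) (Nsz L) k"
    and S: "S = {m * 2 ^ (L - ls) + 1..k}"
    using assms unfolding dyaPM_query_def closest_half_def Let_def ls_def[symmetric] by blast
  have half: "1/2 \<le> piS \<pi> (H L ls m)"
    using lstar_spec(3) m(2) unfolding ls_def by force
  have "H L ls m \<subseteq> {1..Nsz L}"
    using H_subset lstar_spec(2) m(1) unfolding ls_def by blast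
  then have "k \<le> Suc m * 2 ^ (L - ls)"
    using half posterior_pos[OF post]
    by (intro closest_half_le[OF _ closest]) (auto simp: H_eq)
  then have "S \<subseteq> H L ls m"
    by (auto simp: S H_eq)
  with m half S closest show ?thesis
    using that unfolding ls_def by blast
qed

lemma dyaPM_query_mass_gt_quarter:
  assumes "dyaPM_query L \<pi> S"
  shows "1/4 < piS \<pi> S"
proof -
  define ls where "ls = lstar L \<pi>"
  obtain m k where m: "m < 2 ^ ls" "1/2 \<le> piS \<pi> (H L ls m)"
    and S: "S = {m * 2 ^ (L - ls) + 1..k}"
    and closest: "closest_half \<pi> (m * 2 ^ (L - ls) + 1) (Nsz L) k"
    using dyaPM_queryE[OF assms] unfolding ls_def by blast
  have pos: "\<And>i. i \<in> {m * 2 ^ (L - ls) + 1..Nsz L} \<Longrightarrow> 0 < \<pi> i"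
    using posterior_pos[OF post] by auto
  show ?thesis
  proof (cases "ls = L")
    case True
    then have "1/2 \<le> \<pi> (Suc m)"
      using m(2) by (simp add: H_top_level piS_def)
    then show ?thesis
      using closest_half_singleton[OF pos closest] True by (simp add: S piS_def)
  next
    case False
    then have ls: "ls < L"
      using lstar_spec(2) by (simp add: ls_def)
    have "H L ls m \<subseteq> {m * 2 ^ (L - ls) + 1..Nsz L}"
      using H_subset[OF less_imp_le[OF ls] m(1)] by (auto simp: H_eq)
    then have "piS \<pi> (H L ls m) \<le> piS \<pi> {m * 2 ^ (L - ls) + 1..Nsz L}"
      by (rule posterior_piS_mono[OF post]) auto
    then show ?thesis
      using closest_half_gt_quarter[OF pos closest] lstar_less_imp_lt_half ls m(2)
      by (simp add: S ls_def)
  qed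
qed

lemma dyaPM_straddle_next_block:
  assumes l: "lstar L \<pi> < l" "l \<le> L"
    and closest: "closest_half \<pi> (a * 2 ^ (L - l) + 1) (Nsz L) k"
    and b: "a < b" "b < 2 ^ l" "b * 2 ^ (L - l) \<le> k" "k < Suc b * 2 ^ (L - l)"
  defines "S \<equiv> {a * 2 ^ (L - l) + 1..k}" and "F \<equiv> \<Sum>m = a..<b. piS \<pi> (H L l m)"
  shows "piS \<pi> (H L l b) < 1/2" "1/2 \<le> F + piS \<pi> (H L l b)"
    "1 - (F + piS \<pi> (H L l b)) \<le> piS \<pi> S" "piS \<pi> (H L l b \<inter> S) = piS \<pi> S - F"
proof -
  define w d where "w = (2::nat) ^ (L - l)" and "d = a * w + 1"
  have pos: "\<And>i. i \<in> {d..Nsz L} \<Longrightarrow> 0 < \<pi> i"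
    using posterior_pos[OF post] by (auto simp: d_def)
  have "a * w \<le> b * w"
    using b(1) by simp
  have "Suc b * w \<le> 2 ^ l * w"
    using b(2) by (intro mult_right_mono) auto
  then have "Suc b * w \<le> Nsz L"
    using l by (simp add: w_def Nsz_def flip: power_add)
  then have "1/2 \<le> piS \<pi> {d..Suc b * w}" "1 - piS \<pi> {d..Suc b * w} \<le> piS \<pi> S"
    using closest_half_beyond[OF pos closest[folded w_def d_def]] b(4)
    by (simp_all add: S_def d_def w_def)
  moreover have "piS \<pi> {d..Suc b * w} = F + piS \<pi> (H L l b)"
    using piS_blocks[of a "Suc b" \<pi> L l] b(1) by (simp add: F_def d_def w_def)
  moreover have "H L l b \<inter> S = {b * w + 1..k}"
    using b(3,4) \<open>a * w \<le> b * w\<close> by (auto simp: S_def H_eq w_def)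
  then have "piS \<pi> S = F + piS \<pi> (H L l b \<inter> S)"
    using piS_atLeastAtMost_split[of d "b * w" k \<pi>] piS_blocks[of a b \<pi> L l] b(1,3)
      \<open>a * w \<le> b * w\<close>
    by (simp add: S_def F_def d_def w_def)
  ultimately show "piS \<pi> (H L l b) < 1/2" "1/2 \<le> F + piS \<pi> (H L l b)"
    "1 - (F + piS \<pi> (H L l b)) \<le> piS \<pi> S" "piS \<pi> (H L l b \<inter> S) = piS \<pi> S - F"
    using lstar_greatest[OF l b(2)] by simp_all
qed

lemma dyaPM_straddle:
  assumes l: "lstar L \<pi> < l" "l \<le> L"
    and closest: "closest_half \<pi> (a * 2 ^ (L - l) + 1) (Nsz L) k"
    and k: "Suc a * 2 ^ (L - l) < k" and S: "S = {a * 2 ^ (L - l) + 1..k}"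
  obtains b F where "a < b" "b \<le> 2 ^ l" "\<And>m. m \<in> {a..<b} \<Longrightarrow> H L l m \<subseteq> S"
    "piS \<pi> S \<le> 3/4" "F = (\<Sum>m = a..<b. piS \<pi> (H L l m))" "b = 2 ^ l \<Longrightarrow> piS \<pi> S = F"
    "b < 2 ^ l \<Longrightarrow> piS \<pi> (H L l b) < 1/2 \<and> 1/2 \<le> F + piS \<pi> (H L l b)
       \<and> 1 - (F + piS \<pi> (H L l b)) \<le> piS \<pi> S \<and> piS \<pi> (H L l b \<inter> S) = piS \<pi> S - F"
proof -
  define w b where "w = (2::nat) ^ (L - l)" and "b = k div w"
  have pos: "\<And>i. i \<in> {a * w + 1..Nsz L} \<Longrightarrow> 0 < \<pi> i"
    using posterior_pos[OF post] by auto
  have small: "\<And>i. i \<in> {a * w + 1..Nsz L} \<Longrightarrow> \<pi> i < 1/2"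
    using lstar_less_imp_lt_half l by auto
  have k_le: "k \<le> 2 ^ l * w"
    using closest_half_bounds[OF pos closest[folded w_def]] l
    by (simp add: Nsz_def w_def flip: power_add)
  have "k mod w < w" "Suc b * w = b * w + w"
    by (simp_all add: w_def)
  then have bk: "b * w \<le> k" "k < Suc b * w"
    using div_mult_mod_eq[of k w] unfolding b_def by linarith+
  then have "Suc a * w < Suc b * w" "b * w \<le> 2 ^ l * w"
    using k k_le unfolding w_def by linarith+
  then have "a < b" "b \<le> 2 ^ l"
    by (simp_all add: w_def)
  moreover have "H L l m \<subseteq> S" if "m \<in> {a..<b}" for m
    using that bk mult_le_mono1[of a m w] mult_le_mono1[of "Suc m" b w]
    by (auto simp: S H_eq w_def[symmetric])
  moreover have "piS \<pi> S \<le> 3/4"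
  proof -
    have "1 \<le> w" "Suc a * w = a * w + w"
      by (simp_all add: w_def)
    then have "a * w + 1 < k"
      using k unfolding w_def by linarith
    then show ?thesis
      using closest_half_lt_three_quarters[OF pos closest[folded w_def] small]
      by (simp add: S w_def)
  qed
  moreover have "piS \<pi> S = (\<Sum>m = a..<b. piS \<pi> (H L l m))" if "b = 2 ^ l"
    using that bk k_le piS_blocks[of a b \<pi> L l] \<open>a < b\<close> by (simp add: S w_def)
  ultimately show ?thesis
    using that[of b] dyaPM_straddle_next_block[OF l closest \<open>a < b\<close> _ bk[unfolded w_def]] S
    by blast
qed

lemma dyaPM_query_in_coarse_block:
  assumes Q: "dyaPM_query L \<pi> S" and l: "l \<le> lstar L \<pi>"
  obtains m where "m < 2 ^ l" "S \<subseteq> H L l m"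
proof -
  obtain m where m: "m < 2 ^ lstar L \<pi>" and S: "S \<subseteq> H L (lstar L \<pi>) m"
    using dyaPM_queryE[OF Q] by blast
  have "m div 2 ^ (lstar L \<pi> - l) < 2 ^ l"
    using m l by (simp add: less_mult_imp_div_less flip: power_add)
  then show ?thesis
    using that S H_nested[OF l lstar_spec(2)] by blast
qed

lemma dyaPM_query_cases:
  assumes Q: "dyaPM_query L \<pi> S" and l: "l \<le> L"
  obtains (inside) m where "m < 2 ^ l" "S \<subseteq> H L l m"
  | (straddle) a b F where "a < b" "b \<le> 2 ^ l" "\<And>m. m \<in> {a..<b} \<Longrightarrow> H L l m \<subseteq> S"
      "piS \<pi> S \<le> 3/4" "F = (\<Sum>m = a..<b. piS \<pi> (H L l m))" "b = 2 ^ l \<Longrightarrow> piS \<pi> S = F"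
      "b < 2 ^ l \<Longrightarrow> piS \<pi> (H L l b) < 1/2 \<and> 1/2 \<le> F + piS \<pi> (H L l b)
         \<and> 1 - (F + piS \<pi> (H L l b)) \<le> piS \<pi> S \<and> piS \<pi> (H L l b \<inter> S) = piS \<pi> S - F"
proof -
  define ls where "ls = lstar L \<pi>"
  obtain m k where m: "m < 2 ^ ls" and S: "S = {m * 2 ^ (L - ls) + 1..k}"
    and closest: "closest_half \<pi> (m * 2 ^ (L - ls) + 1) (Nsz L) k"
    using dyaPM_queryE[OF Q] unfolding ls_def by blast
  show ?thesis
  proof (cases "l \<le> ls")
    case True
    then show ?thesis
      using dyaPM_query_in_coarse_block[OF Q] inside unfolding ls_def by blast
  next
    case False
    define a where "a = m * 2 ^ (l - ls)"
    have W: "m * 2 ^ (L - ls) = a * 2 ^ (L - l)"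
      using False l by (simp add: a_def mult.assoc flip: power_add)
    show ?thesis
    proof (cases "k \<le> Suc a * 2 ^ (L - l)")
      case True
      have "Suc m * 2 ^ (l - ls) \<le> 2 ^ ls * 2 ^ (l - ls)"
        using m by (intro mult_right_mono) auto
      moreover have "a < Suc m * 2 ^ (l - ls)" "2 ^ ls * 2 ^ (l - ls) = (2::nat) ^ l"
        using False by (simp_all add: a_def flip: power_add)
      ultimately have "a < 2 ^ l"
        by linarith
      then show ?thesis
        using inside True S by (auto simp: W H_eq)
    next
      case False
      have "ls < l" "closest_half \<pi> (a * 2 ^ (L - l) + 1) (Nsz L) k"
        "Suc a * 2 ^ (L - l) < k" "S = {a * 2 ^ (L - l) + 1..k}"
        using \<open>\<not> l \<le> ls\<close> closest S False by (simp_all add: W)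
      note straddle_facts = this[unfolded ls_def]
      show ?thesis
        by (rule dyaPM_straddle[OF straddle_facts(1) l straddle_facts(2-4)]) (rule straddle)
    qed
  qed
qed

lemma dyaPM_query_card:
  assumes "dyaPM_query L \<pi> S"
  shows "S \<subseteq> {1..Nsz L}" "0 < card S" "card S \<le> 2 ^ (L - 1)"
proof -
  define ls where "ls = lstar L \<pi>"
  obtain m k where m: "m < 2 ^ ls" and S: "S = {m * 2 ^ (L - ls) + 1..k}" "S \<subseteq> H L ls m"
    and closest: "closest_half \<pi> (m * 2 ^ (L - ls) + 1) (Nsz L) k"
    using dyaPM_queryE[OF assms] unfolding ls_def by blast
  have ls: "1 \<le> ls" "ls \<le> L"
    using lstar_spec by (simp_all add: ls_def)
  show "S \<subseteq> {1..Nsz L}"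
    using S(2) H_subset[OF ls(2) m] by blast
  show "0 < card S"
    using closest by (simp add: S(1) closest_half_def)
  have "card S \<le> card (H L ls m)"
    using S(2) by (intro card_mono) (auto simp: H_eq)
  also have "\<dots> = 2 ^ (L - ls)"
    by (simp add: H_eq)
  also have "\<dots> \<le> 2 ^ (L - 1)"
    using ls by (intro power_increasing) auto
  finally show "card S \<le> 2 ^ (L - 1)" .
qed

end

lemma noise_bounds:
  assumes mono: "mono_on {0<..<1} p" and range: "\<forall>x\<in>{0<..<1}. 0 < p x \<and> p x < 1/2"
    and L: "1 \<le> L" and card: "0 < card S" "card S \<le> 2 ^ (L - 1)"
  shows "0 < noise p L S" "noise p L S \<le> p (1/2)"
proof -
  define r where "r = real (card S) / 2 ^ L"
  have "real (card S) \<le> 2 ^ (L - 1)"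
    using card(2) by (metis of_nat_le_iff of_nat_numeral of_nat_power)
  moreover have "(2::real) ^ L = 2 * 2 ^ (L - 1)"
    using L by (simp flip: power_Suc)
  ultimately have r: "0 < r" "r \<le> 1/2"
    using card(1) by (simp_all add: r_def field_simps)
  then show "0 < noise p L S"
    using range by (simp add: noise_def flip: r_def)
  show "noise p L S \<le> p (1/2)"
    unfolding noise_def r_def[symmetric] using r by (intro mono_onD[OF mono]) auto
qed

lemma reach_posterior:
  assumes mono: "mono_on {0<..<1} p" and range: "\<forall>x\<in>{0<..<1}. 0 < p x \<and> p x < 1/2"
    and L: "1 \<le> L" and "reach p L t \<pi>"
  shows "posterior L \<pi>"
  using \<open>reach p L t \<pi>\<close>
proof induction
  case init
  then show ?case
    by (simp add: posterior_def piS_def Nsz_def)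
next
  case (step t \<pi> S y)
  then have "0 < noise p L S" "noise p L S \<le> p (1/2)"
    using noise_bounds[OF mono range L] dyaPM_query_card[OF step.IH L] by auto
  moreover have "p (1/2) < 1/2"
    using range by simp
  ultimately show ?case
    using posterior_bayes_update[OF step.IH] by simp
qed

context
  fixes p :: "real \<Rightarrow> real" and L l :: nat and \<pi> :: "nat \<Rightarrow> real" and S :: "nat set"
  assumes mono: "mono_on {0<..<1} p" and range: "\<forall>x\<in>{0<..<1}. 0 < p x \<and> p x < 1/2"
    and l: "1 \<le> l" "l \<le> L" and post: "posterior L \<pi>" and Q: "dyaPM_query L \<pi> S"
begin

lemma query_subset: "S \<subseteq> {1..Nsz L}"
  using dyaPM_query_card(1)[OF post le_trans[OF l] Q] .

lemma query_noise_bounds: "0 < noise p L S" "noise p L S \<le> p (1/2)" "p (1/2) < 1/2"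
  using noise_bounds[OF mono range le_trans[OF l]] dyaPM_query_card(2,3)[OF post le_trans[OF l] Q]
    range
  by auto

lemma block_drift_le_drift:
  assumes "M \<subseteq> {..<2 ^ l}"
  shows "sum (block_drift p L l \<pi> S) M \<le> expU_next p L l \<pi> S - Unest L l \<pi>"
  using sum_block_drift_le_drift[OF post l query_subset] query_noise_bounds assms by simp

lemma Kd_le_drift_inside:
  assumes m: "m < 2 ^ l" "S \<subseteq> H L l m"
  shows "Kd p \<le> expU_next p L l \<pi> S - Unest L l \<pi>"
proof -
  have "piS \<pi> S \<le> piS \<pi> (H L l m)"
    using posterior_piS_mono[OF post m(2) H_subset[OF l(2) m(1)]] .
  then have "Kd p \<le> block_drift p L l \<pi> S m"
    using set_drift_query_inside[OF query_noise_bounds(1,2,3), of "piS \<pi> S" "piS \<pi> (H L l m)"]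
      Kd_le_query_inside[of p] dyaPM_query_mass_gt_quarter[OF post le_trans[OF l] Q]
      posterior_piS_H_bounds[OF post l m(1)] m(2)
    by (simp add: block_drift_def Int_absorb1)
  also have "\<dots> \<le> expU_next p L l \<pi> S - Unest L l \<pi>"
    using block_drift_le_drift[of "{m}"] m(1) by simp
  finally show ?thesis .
qed

lemma fK_le_drift:
  assumes "b \<le> 2 ^ l" "\<And>m. m \<in> {a..<b} \<Longrightarrow> H L l m \<subseteq> S" "piS \<pi> S \<le> 3/4"
  shows "fK p (\<Sum>m = a..<b. piS \<pi> (H L l m)) \<le> expU_next p L l \<pi> S - Unest L l \<pi>"
proof -
  have "fK p (\<Sum>m = a..<b. piS \<pi> (H L l m))
      = (\<Sum>m = a..<b. piS \<pi> (H L l m) * KLb (bsc (p (1/2)) 1) (bsc (p (1/2)) (3/4)))"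
    by (simp add: fK_def mixB_eq_bsc sum_distrib_right mult.commute)
  also have "\<dots> \<le> sum (block_drift p L l \<pi> S) {a..<b}"
  proof (rule sum_mono)
    fix m assume m: "m \<in> {a..<b}"
    then have "m < 2 ^ l"
      using assms(1) by simp
    then show "piS \<pi> (H L l m) * KLb (bsc (p (1/2)) 1) (bsc (p (1/2)) (3/4))
        \<le> block_drift p L l \<pi> S m"
      using set_drift_inside_query[OF query_noise_bounds(1,2,3)] posterior_piS_H_bounds[OF post l]
        posterior_piS_mono[OF post assms(2)[OF m] query_subset] assms(2)[OF m] assms(3)
      by (simp add: block_drift_def Int_absorb2)
  qed
  also have "\<dots> \<le> expU_next p L l \<pi> S - Unest L l \<pi>"
    using assms(1) by (intro block_drift_le_drift) auto
  finally show ?thesis .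
qed

lemma gK_le_drift:
  assumes b: "b < 2 ^ l" and F: "0 \<le> F" "F \<le> 1/10"
    and H: "piS \<pi> (H L l b) \<le> 1/2" "1/2 \<le> F + piS \<pi> (H L l b)"
      "1 - (F + piS \<pi> (H L l b)) \<le> piS \<pi> S" "piS \<pi> (H L l b \<inter> S) = piS \<pi> S - F"
  shows "gK p F \<le> expU_next p L l \<pi> S - Unest L l \<pi>"
proof -
  have "piS \<pi> (H L l b \<inter> S) \<le> piS \<pi> (H L l b)"
    using posterior_piS_mono[OF post _ H_subset[OF l(2) b]] by blast
  then have "gK p F \<le> block_drift p L l \<pi> S b"
    using set_drift_partial[OF query_noise_bounds(1,2,3) F] H
    by (simp add: gK_def mixB_eq_bsc block_drift_def)
  also have "\<dots> \<le> expU_next p L l \<pi> S - Unest L l \<pi>"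
    using block_drift_le_drift[of "{b}"] b by simp
  finally show ?thesis .
qed

lemma Kd_le_drift: "Kd p \<le> expU_next p L l \<pi> S - Unest L l \<pi>"
proof (cases rule: dyaPM_query_cases[OF post le_trans[OF l] Q l(2), case_names inside straddle])
  case (inside m)
  then show ?thesis
    by (rule Kd_le_drift_inside)
next
  case (straddle a b F)
  have p_half: "0 < p (1/2)" "p (1/2) < 1/2"
    using query_noise_bounds by simp_all
  have F0: "0 \<le> F"
    unfolding straddle(5) using posterior_piS_H_bounds[OF post l] straddle(2)
    by (intro sum_nonneg) (simp add: less_imp_le)
  have fK: "fK p F \<le> expU_next p L l \<pi> S - Unest L l \<pi>"
    using fK_le_drift straddle(2-5) by simp
  show ?thesis
  proof (cases "1/10 \<le> F")
    case True
    then show ?thesis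
      using Kd_le_fK[of p, OF p_half] fK by fastforce
  next
    case False
    have "b < 2 ^ l"
      using straddle(2,6) dyaPM_query_mass_gt_quarter[OF post le_trans[OF l] Q] False by force
    then have "gK p F \<le> expU_next p L l \<pi> S - Unest L l \<pi>"
      using gK_le_drift F0 False straddle(7) by simp
    with Kd_le_max_fK_gK[of p, OF p_half F0] fK False show ?thesis
      by linarith
  qed
qed

end

theorem lemma9:
  fixes p :: "real \<Rightarrow> real" and L l t :: nat and \<pi> :: "nat \<Rightarrow> real" and S :: "nat set"
  assumes "continuous_on {0<..<1} p"
    and "mono_on {0<..<1} p"
    and "\<forall>x\<in>{0<..<1}. 0 < p x \<and> p x < 1/2"
    and "1 \<le> l" and "l < L"
    and "0 < t" and "reach p L t \<pi>"
    and "dyaPM_query L \<pi> S"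
  shows "expU_next p L l \<pi> S - Unest L l \<pi> \<ge> Kd p \<and> Kd p > 0"
proof -
  have "posterior L \<pi>"
    using reach_posterior[OF assms(2,3) _ assms(7)] assms(4,5) by simp
  then have "Kd p \<le> expU_next p L l \<pi> S - Unest L l \<pi>"
    using Kd_le_drift[OF assms(2,3,4) _ _ assms(8)] assms(5) by simp
  moreover have "0 < Kd p"
    using assms(3) by (intro Kd_pos) auto
  ultimately show ?thesis
    by simp
qed

end
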